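(* For every $n\ge1$, the map $\pi:\widehat{\mathcal{T}}_n\to\widehat{\mathcal{T}}_n$ is a bijection.
   Context: A plane binary tree is a finite rooted tree in which every vertex is either an endpoint (a leaf, with no children) or has exactly two children, an ordered left child and right child. Every non-root vertex is thus either a left descendent or a right descendent of its parent. The endpoints are ordered from left to right in the planar order. $\mathcal{T}_n$ denotes the set of plane binary trees with exactly $n+2$ endpoints. A last branching vertex of a plane binary tree is a non-endpoint vertex both of whose children are endpoints. For $n\ge1$ the root is never a last branching vertex. A marked tree is a pair $(T,v)$ with $T\in\mathcal{T}_n$ and $v$ a last branching vertex of $T$. The set of marked trees is $\widehat{\mathcal{T}}_n$. Definition of $\pi$. Let $(T,v)\in\widehat{\mathcal{T}}_n$, and let $a$ and $b$ be the left and right children of $v$ (both endpoints). Case 1: $v$ is a right child. - Delete the endpoint $a$ together with the edge $va$. The vertex $v$ and its remaining child $b$ are merged into a single endpoint, sitting at $v$'s position; this endpoint is a right child. The result is a tree with $n+1$ endpoints. - If $b$ was not the rightmost endpoint of $T$: let $L$ be the first endpoint to the right of this new endpoint that is a right child. Replace $L$ by a new internal vertex $w$ (still a right child, in $L$'s place) with two new endpoint children. - If $b$ was the rightmost endpoint of $T$: let $L$ be the rightmost endpoint of the reduced tree that is a left child. Replace $L$ by a new internal vertex $w$ (a left child, in $L$'s place) with two new endpoint children. - In either sub-case, $\pi(T,v)=(T',w)$, where $T'$ is the resulting tree and the mark is on $w$. Case 2: $v$ is a left child. Apply the mirror image of Case 1, exchanging left and right everywhere. - Delete $b$ and the edge $vb$,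 merging $v$ and $a$ into a single endpoint, which is a left child. - If $a$ was not the leftmost endpoint of $T$, graft a cherry (an internal vertex $w$ with two new endpoint children) onto the first left-child endpoint to its left. - Otherwise, graft the cherry onto the leftmost endpoint that is a right child. - Mark the new vertex $w$. *)

theory Defs
  imports Main
begin

text \<open>Vertices are addressed by their path from the root:
  a list of directions, False = go to the left child, True = go to the right child.\<close>

datatype ptree = Leaf | Node ptree ptree

fun leaves :: "ptree \<Rightarrow> bool list list" where
  "leaves Leaf = [[]]"
| "leaves (Node l r) = map (Cons False) (leaves l) @ map (Cons True) (leaves r)"

fun subtree_at :: "ptree \<Rightarrow> bool list \<Rightarrow> ptree option" where
  "subtree_at t [] = Some t"
| "subtree_at Leaf (_ # _) = None"
| "subtree_at (Node l r) (b # p) = subtree_at (if b then r else l) p"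

fun replace_at :: "ptree \<Rightarrow> bool list \<Rightarrow> ptree \<Rightarrow> ptree" where
  "replace_at t [] s = s"
| "replace_at Leaf (_ # _) s = Leaf"
| "replace_at (Node l r) (b # p) s =
     (if b then Node l (replace_at r p s) else Node (replace_at l p s) r)"

definition is_right_child :: "bool list \<Rightarrow> bool" where
  "is_right_child u \<longleftrightarrow> u \<noteq> [] \<and> last u"

definition is_left_child :: "bool list \<Rightarrow> bool" where
  "is_left_child u \<longleftrightarrow> u \<noteq> [] \<and> \<not> last u"

definition trees :: "nat \<Rightarrow> ptree set" where
  "trees n = {T. length (leaves T) = n + 2}"

definition last_branching :: "ptree \<Rightarrow> bool list \<Rightarrow> bool" where
  "last_branching T v \<longleftrightarrow> subtree_at T v = Some (Node Leaf Leaf)"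

definition marked :: "nat \<Rightarrow> (ptree \<times> bool list) set" where
  "marked n = {(T, v). T \<in> trees n \<and> last_branching T v}"

text \<open>After deleting a child of v, v becomes an endpoint of the
  reduced tree T0 (at the same address).\<close>
definition pi_map :: "ptree \<times> bool list \<Rightarrow> ptree \<times> bool list" where
  "pi_map Tv = (case Tv of (T, v) \<Rightarrow>
     (let T0 = replace_at T v Leaf;
          ls = leaves T0;
          before = takeWhile (\<lambda>u. u \<noteq> v) ls;
          after = tl (dropWhile (\<lambda>u. u \<noteq> v) ls);
          L = (if is_right_child v then
                 (if after \<noteq> [] then hd (filter is_right_child after)
                  else last (filter is_left_child ls))
               else
                 (if before \<noteq> [] then last (filter is_left_child before)
                  else hd (filter is_right_child ls)))
      in (replace_at T0 L (Node Leaf Leaf), L)))"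

end

theory Submission
  imports Defs
begin

(* Removing the two endpoint children of the marked vertex v turns T
   into a reduced tree T0 with n+1 endpoints in which v is an endpoint; pi then
   grafts a cherry onto an endpoint L of T0 chosen only from the planar list of
   endpoints of T0 and from v.  Conversely, v can be read off from that list and L:
   if L is a right child, v is the last right child before L (or the first
   endpoint if there is none); if L is a left child, v is the first left child
   after L (or the last endpoint).  Hence pi has a left inverse on marked trees,
   so it is injective, and it maps the finite set of marked trees into itself;
   an injective self-map of a finite set is a bijection. *)

section \<open>Endpoint lists\<close>

lemma leaves_ne: "leaves T \<noteq> []"
  by (induct T) auto

lemma leaves_distinct: "distinct (leaves T)"
  by (induct T) (auto simp: distinct_map)

lemma leaves_are_leaves: "u \<in> set (leaves T) \<Longrightarrow> subtree_at T u = Some Leaf"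
  by (induct T arbitrary: u) auto

lemma length_leaves: "length (leaves T) = size T + 1"
  by (induct T) auto

text \<open>The leftmost endpoint lies on the all-left path, the rightmost one on the
  all-right path; so in a tree with an inner vertex they are a left resp. right child.\<close>

lemma hd_leaves_all_left: "\<forall>b \<in> set (hd (leaves T)). \<not> b"
  by (induct T) (auto simp: hd_map leaves_ne)

lemma last_leaves_all_right: "\<forall>b \<in> set (last (leaves T)). b"
  by (induct T) (simp_all add: last_map leaves_ne)

lemma leaves_nonroot: "T \<noteq> Leaf \<Longrightarrow> u \<in> set (leaves T) \<Longrightarrow> u \<noteq> []"
  by (cases T) auto

lemma first_leaf_left_child:
  assumes "T \<noteq> Leaf" shows "is_left_child (hd (leaves T))"
proof -
  have "hd (leaves T) \<noteq> []" using leaves_nonroot[OF assms hd_in_set[OF leaves_ne]] .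
  with hd_leaves_all_left[of T] show ?thesis unfolding is_left_child_def
    by (blast dest: last_in_set)
qed

lemma last_leaf_right_child:
  assumes "T \<noteq> Leaf" shows "is_right_child (last (leaves T))"
proof -
  have "last (leaves T) \<noteq> []" using leaves_nonroot[OF assms last_in_set[OF leaves_ne]] .
  with last_leaves_all_right[of T] show ?thesis unfolding is_right_child_def
    by (blast dest: last_in_set)
qed

lemma leaves_replace_at:
  "subtree_at T p = Some s \<Longrightarrow> \<exists>pre post. leaves T = pre @ map (\<lambda>x. p @ x) (leaves s) @ post
     \<and> (\<forall>s'. leaves (replace_at T p s') = pre @ map (\<lambda>x. p @ x) (leaves s') @ post)"
proof (induct p arbitrary: T)
  case Nil
  then have "T = s" by simp
  then show ?case by (intro exI[of _ "[]"]) simp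
next
  case (Cons b p)
  then obtain l r where T: "T = Node l r" by (cases T) auto
  show ?case
  proof (cases b)
    case True
    with Cons.prems T have "subtree_at r p = Some s" by simp
    from Cons.hyps[OF this] obtain pre post where
      r: "leaves r = pre @ map (\<lambda>x. p @ x) (leaves s) @ post"
         "\<forall>s'. leaves (replace_at r p s') = pre @ map (\<lambda>x. p @ x) (leaves s') @ post"
      by blast
    show ?thesis
      by (rule exI[of _ "map (Cons False) (leaves l) @ map (Cons True) pre"],
          rule exI[of _ "map (Cons True) post"]) (simp add: T True r comp_def)
  next
    case False
    with Cons.prems T have "subtree_at l p = Some s" by simp
    from Cons.hyps[OF this] obtain pre post where
      l: "leaves l = pre @ map (\<lambda>x. p @ x) (leaves s) @ post"
         "\<forall>s'. leaves (replace_at l p s') = pre @ map (\<lambda>x. p @ x) (leaves s') @ post"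
      by blast
    show ?thesis
      by (rule exI[of _ "map (Cons False) pre"],
          rule exI[of _ "map (Cons False) post @ map (Cons True) (leaves r)"])
        (simp add: T False l comp_def)
  qed
qed

lemma subtree_at_replace_at:
  "subtree_at T p \<noteq> None \<Longrightarrow> subtree_at (replace_at T p s) p = Some s"
  by (induct T p s rule: replace_at.induct) auto

lemma replace_at_replace_at:
  "subtree_at T p \<noteq> None \<Longrightarrow> replace_at (replace_at T p s) p s' = replace_at T p s'"
  by (induct T p s rule: replace_at.induct) auto

lemma replace_at_same: "subtree_at T p = Some s \<Longrightarrow> replace_at T p s = T"
  by (induct T p s rule: replace_at.induct) auto

lemma replace_at_restore:
  assumes "subtree_at T p = Some s"
  shows "replace_at (replace_at T p s') p s = T"
proof -
  have "replace_at (replace_at T p s') p s = replace_at T p s"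
    using assms by (intro replace_at_replace_at) simp
  also have "\<dots> = T" by (rule replace_at_same[OF assms])
  finally show ?thesis .
qed

section \<open>Choosing the graft site and recovering the mark\<close>

definition graft_site :: "bool list list \<Rightarrow> bool list \<Rightarrow> bool list" where
  "graft_site ls v = (let before = takeWhile (\<lambda>u. u \<noteq> v) ls;
          after = tl (dropWhile (\<lambda>u. u \<noteq> v) ls)
      in (if is_right_child v then
            (if after \<noteq> [] then hd (filter is_right_child after)
             else last (filter is_left_child ls))
          else
            (if before \<noteq> [] then last (filter is_left_child before)
             else hd (filter is_right_child ls))))"

definition recovered_site :: "bool list list \<Rightarrow> bool list \<Rightarrow> bool list" where
  "recovered_site ls L = (let before = takeWhile (\<lambda>u. u \<noteq> L) ls;
          after = tl (dropWhile (\<lambda>u. u \<noteq> L) ls)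
      in (if is_right_child L then
            (if filter is_right_child before \<noteq> [] then last (filter is_right_child before)
             else hd ls)
          else
            (if filter is_left_child after \<noteq> [] then hd (filter is_left_child after)
             else last ls)))"

lemma split_at_elem:
  "x \<notin> set xs \<Longrightarrow> takeWhile (\<lambda>u. u \<noteq> x) (xs @ x # ys) = xs
     \<and> tl (dropWhile (\<lambda>u. u \<noteq> x) (xs @ x # ys)) = ys"
  by (induct xs) auto

lemma graft_site_split:
  assumes "v \<notin> set pre"
  shows "graft_site (pre @ v # post) v =
    (if is_right_child v then
       (if post \<noteq> [] then hd (filter is_right_child post)
        else last (filter is_left_child (pre @ [v])))
     else
       (if pre \<noteq> [] then last (filter is_left_child pre)
        else hd (filter is_right_child (v # post))))"
  using split_at_elem[OF assms] by (simp add: graft_site_def)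

lemma recovered_site_split:
  assumes "L \<notin> set xs"
  shows "recovered_site (xs @ L # ys) L =
    (if is_right_child L then
       (if filter is_right_child xs \<noteq> [] then last (filter is_right_child xs)
        else hd (xs @ L # ys))
     else
       (if filter is_left_child ys \<noteq> [] then hd (filter is_left_child ys)
        else last (xs @ L # ys)))"
  using split_at_elem[OF assms] by (simp add: recovered_site_def)

lemma split_first_filter:
  assumes "filter P xs \<noteq> []"
  obtains us vs where "xs = us @ hd (filter P xs) # vs" "\<forall>u \<in> set us. \<not> P u"
    "P (hd (filter P xs))"
proof -
  obtain y rest where "filter P xs = y # rest"
    using assms by (cases "filter P xs") auto
  from filter_eq_ConsD[OF this] this show ?thesis using that by auto
qed

lemma split_last_filter:
  assumes "filter P xs \<noteq> []"
  obtains us vs where "xs = us @ last (filter P xs) # vs" "\<forall>u \<in> set vs. \<not> P u"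
    "P (last (filter P xs))"
proof -
  have "filter P (rev xs) \<noteq> []" using assms by (simp add: rev_filter[symmetric])
  then obtain us vs where "rev xs = us @ hd (filter P (rev xs)) # vs" "\<forall>u \<in> set us. \<not> P u"
    "P (hd (filter P (rev xs)))"
    by (rule split_first_filter)
  moreover have "hd (filter P (rev xs)) = last (filter P xs)"
    using assms by (simp add: rev_filter[symmetric] hd_rev)
  ultimately have "xs = rev vs @ last (filter P xs) # rev us" "\<forall>u \<in> set (rev us). \<not> P u"
    "P (last (filter P xs))"
    by (auto simp: rev_swap)
  then show ?thesis using that by blast
qed

lemma left_not_right: "is_left_child u \<Longrightarrow> \<not> is_right_child u"
  by (simp add: is_left_child_def is_right_child_def)

lemma graft_site_right_child:
  assumes ls: "ls = pre @ v # post" and dist: "distinct ls" and v: "is_right_child v"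
    and first: "is_left_child (hd ls)" and final: "is_right_child (last ls)"
  shows "graft_site ls v \<in> set ls \<and> recovered_site ls (graft_site ls v) = v"
proof (cases "post = []")
  case False
  define L where "L = hd (filter is_right_child post)"
  have "filter is_right_child post \<noteq> []"
    using False final ls by (auto simp: filter_empty_conv)
  then obtain us vs where post: "post = us @ L # vs" "\<forall>u \<in> set us. \<not> is_right_child u"
    "is_right_child L"
    unfolding L_def by (rule split_first_filter)
  (* L is the first right child after v, so v is the last right child before L *)
  have ls': "ls = (pre @ v # us) @ L # vs" using ls post by simp
  have site: "graft_site ls v = L"
    using graft_site_split[of v pre post] ls dist v False by (simp add: L_def)
  have "L \<notin> set (pre @ v # us)" using dist ls' by auto
  moreover have "filter is_right_child us = []" using post(2) by (simp add: filter_empty_conv)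
  ultimately have "recovered_site ls L = v"
    unfolding ls' using recovered_site_split[of L "pre @ v # us" vs] post(3) v by simp
  with site ls' show ?thesis by simp
next
  case True
  (* v is the last endpoint and L the last left child; none follows L *)
  define L where "L = last (filter is_left_child ls)"
  have "filter is_left_child ls \<noteq> []"
    using first ls hd_in_set[of ls] by (auto simp: filter_empty_conv)
  then obtain us vs where ls': "ls = us @ L # vs" "\<forall>u \<in> set vs. \<not> is_left_child u"
    "is_left_child L"
    unfolding L_def by (rule split_last_filter)
  have site: "graft_site ls v = L"
    using graft_site_split[of v pre post] ls dist v True by (simp add: L_def)
  have "L \<notin> set us" using dist ls'(1) by simp
  moreover have "filter is_left_child vs = []" using ls'(2) by (simp add: filter_empty_conv)
  moreover have "last ls = v" using ls True by simp
  ultimately have "recovered_site ls L = v"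
    using recovered_site_split[of L us vs] ls'(1) left_not_right[OF ls'(3)] by simp
  with site ls' show ?thesis by simp
qed

lemma graft_site_left_child:
  assumes ls: "ls = pre @ v # post" and dist: "distinct ls" and v: "is_left_child v"
    and first: "is_left_child (hd ls)" and final: "is_right_child (last ls)"
  shows "graft_site ls v \<in> set ls \<and> recovered_site ls (graft_site ls v) = v"
proof (cases "pre = []")
  case False
  define L where "L = last (filter is_left_child pre)"
  have "filter is_left_child pre \<noteq> []"
    using False first ls hd_in_set[of pre] by (auto simp: filter_empty_conv)
  then obtain us vs where pre: "pre = us @ L # vs" "\<forall>u \<in> set vs. \<not> is_left_child u"
    "is_left_child L"
    unfolding L_def by (rule split_last_filter)
  (* L is the last left child before v, so v is the first left child after L *)
  have ls': "ls = us @ L # (vs @ v # post)" using ls pre by simp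
  have site: "graft_site ls v = L"
    using graft_site_split[of v pre post] ls dist left_not_right[OF v] False by (simp add: L_def)
  have "L \<notin> set us" using dist ls' by simp
  moreover have "filter is_left_child vs = []" using pre(2) by (simp add: filter_empty_conv)
  ultimately have "recovered_site ls L = v"
    unfolding ls' using recovered_site_split[of L us "vs @ v # post"] left_not_right[OF pre(3)] v
    by simp
  with site ls' show ?thesis by simp
next
  case True
  (* v is the first endpoint and L the first right child; none precedes L *)
  define L where "L = hd (filter is_right_child ls)"
  have "filter is_right_child ls \<noteq> []"
    using final ls last_in_set[of ls] by (auto simp: filter_empty_conv)
  then obtain us vs where ls': "ls = us @ L # vs" "\<forall>u \<in> set us. \<not> is_right_child u"
    "is_right_child L"
    unfolding L_def by (rule split_first_filter)
  have site: "graft_site ls v = L"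
    using graft_site_split[of v pre post] ls dist left_not_right[OF v] True by (simp add: L_def)
  have "L \<notin> set us" using dist ls'(1) by simp
  moreover have "filter is_right_child us = []" using ls'(2) by (simp add: filter_empty_conv)
  moreover have "hd ls = v" using ls True by simp
  ultimately have "recovered_site ls L = v"
    using recovered_site_split[of L us vs] ls'(1) ls'(3) by simp
  with site ls' show ?thesis by simp
qed

lemma graft_site_recovered:
  assumes "T \<noteq> Leaf" and "leaves T = pre @ v # post"
  shows "graft_site (leaves T) v \<in> set (leaves T)
    \<and> recovered_site (leaves T) (graft_site (leaves T) v) = v"
proof -
  have "v \<noteq> []" using leaves_nonroot[OF assms(1)] assms(2) by simp
  then consider "is_right_child v" | "is_left_child v"
    by (auto simp: is_left_child_def is_right_child_def)
  then show ?thesis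
    using graft_site_right_child[OF assms(2)] graft_site_left_child[OF assms(2)]
      leaves_distinct first_leaf_left_child[OF assms(1)] last_leaf_right_child[OF assms(1)]
    by cases blast+
qed

section \<open>The map pi on trees and its left inverse\<close>

lemma pi_map_graft_site:
  "pi_map (T, v) = (let T0 = replace_at T v Leaf; L = graft_site (leaves T0) v
     in (replace_at T0 L (Node Leaf Leaf), L))"
  by (simp add: pi_map_def graft_site_def Let_def)

definition pi_inverse :: "ptree \<times> bool list \<Rightarrow> ptree \<times> bool list" where
  "pi_inverse Tw = (case Tw of (T', w) \<Rightarrow>
     (let T0 = replace_at T' w Leaf; v = recovered_site (leaves T0) w
      in (replace_at T0 v (Node Leaf Leaf), v)))"

lemma collapse_marked:
  assumes "(T, v) \<in> marked n"
  obtains pre post where "leaves (replace_at T v Leaf) = pre @ v # post"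
    "length (leaves (replace_at T v Leaf)) = n + 1"
proof -
  have len: "length (leaves T) = n + 2" and st: "subtree_at T v = Some (Node Leaf Leaf)"
    using assms by (auto simp: marked_def trees_def last_branching_def)
  from leaves_replace_at[OF st] obtain pre post where
    "leaves T = pre @ [v @ [False], v @ [True]] @ post"
    "leaves (replace_at T v Leaf) = pre @ [v] @ post"
    by fastforce
  with len that show ?thesis by simp
qed

lemma graft_marked:
  assumes "L \<in> set (leaves T0)" and "length (leaves T0) = n + 1"
  shows "(replace_at T0 L (Node Leaf Leaf), L) \<in> marked n"
proof -
  have st: "subtree_at T0 L = Some Leaf" using leaves_are_leaves[OF assms(1)] .
  from leaves_replace_at[OF st] obtain pre post where
    "leaves T0 = pre @ [L] @ post"
    "leaves (replace_at T0 L (Node Leaf Leaf)) = pre @ [L @ [False], L @ [True]] @ post"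
    by fastforce
  then have "length (leaves (replace_at T0 L (Node Leaf Leaf))) = n + 2"
    using assms(2) by simp
  moreover have "subtree_at (replace_at T0 L (Node Leaf Leaf)) L = Some (Node Leaf Leaf)"
    using st by (simp add: subtree_at_replace_at)
  ultimately show ?thesis by (simp add: marked_def trees_def last_branching_def)
qed

lemma pi_map_marked_and_left_inverse:
  assumes n: "n \<ge> 1" and m: "(T, v) \<in> marked n"
  shows "pi_map (T, v) \<in> marked n \<and> pi_inverse (pi_map (T, v)) = (T, v)"
proof -
  define T0 where "T0 = replace_at T v Leaf"
  define L where "L = graft_site (leaves T0) v"
  obtain pre post where ls: "leaves T0 = pre @ v # post" and len: "length (leaves T0) = n + 1"
    using collapse_marked[OF m] unfolding T0_def .
  have "T0 \<noteq> Leaf" using len n by auto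
  then have L: "L \<in> set (leaves T0)" "recovered_site (leaves T0) L = v"
    using graft_site_recovered[OF _ ls] unfolding L_def by auto
  have pi: "pi_map (T, v) = (replace_at T0 L (Node Leaf Leaf), L)"
    by (simp add: pi_map_graft_site T0_def L_def Let_def)
  have st: "subtree_at T0 L = Some Leaf" using leaves_are_leaves[OF L(1)] .
  have "replace_at (replace_at T0 L (Node Leaf Leaf)) L Leaf = T0"
    using replace_at_restore[OF st] .
  moreover have "replace_at T0 v (Node Leaf Leaf) = T"
    using m unfolding T0_def
    by (intro replace_at_restore) (simp add: marked_def last_branching_def)
  ultimately have "pi_inverse (pi_map (T, v)) = (T, v)"
    by (simp add: pi pi_inverse_def L(2) Let_def)
  with pi graft_marked[OF L(1) len] show ?thesis by simp
qed

section \<open>Finiteness\<close>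

lemma finite_trees_of_size: "finite {T :: ptree. size T \<le> k}"
proof (induct k)
  case 0
  have "{T :: ptree. size T \<le> 0} \<subseteq> {Leaf}"
  proof
    fix T :: ptree assume "T \<in> {T. size T \<le> 0}" then show "T \<in> {Leaf}" by (cases T) auto
  qed
  then show ?case using finite_subset by blast
next
  case (Suc k)
  let ?S = "{T :: ptree. size T \<le> k}"
  have "{T :: ptree. size T \<le> Suc k} \<subseteq> {Leaf} \<union> (\<lambda>(l, r). Node l r) ` (?S \<times> ?S)"
  proof
    fix T :: ptree assume "T \<in> {T. size T \<le> Suc k}"
    then show "T \<in> {Leaf} \<union> (\<lambda>(l, r). Node l r) ` (?S \<times> ?S)" by (cases T) auto
  qed
  then show ?case using Suc finite_subset by blast
qed

text \<open>A marked vertex is the parent of an endpoint, so marked trees with n+2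
  endpoints form a finite set.\<close>

lemma finite_marked: "finite (marked n)"
proof -
  have "finite (trees n)"
    using finite_trees_of_size[of "n + 1"]
    by (rule finite_subset[rotated]) (auto simp: trees_def length_leaves)
  moreover have "marked n \<subseteq> (\<Union>T \<in> trees n. {T} \<times> (butlast ` set (leaves T)))"
  proof
    fix x assume "x \<in> marked n"
    then obtain T v where x: "x = (T, v)" "T \<in> trees n" "subtree_at T v = Some (Node Leaf Leaf)"
      by (auto simp: marked_def last_branching_def)
    from leaves_replace_at[OF x(3)] have "v @ [False] \<in> set (leaves T)" by fastforce
    then have "v \<in> butlast ` set (leaves T)" by (metis butlast_snoc image_eqI)
    with x show "x \<in> (\<Union>T \<in> trees n. {T} \<times> (butlast ` set (leaves T)))" by auto
  qed
  ultimately show ?thesis by (auto intro: finite_subset)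
qed

theorem lemma2:
  fixes n :: nat
  assumes "n \<ge> 1"
  shows "bij_betw pi_map (marked n) (marked n)"
proof -
  note pi = pi_map_marked_and_left_inverse[OF assms]
  have maps_into: "pi_map ` marked n \<subseteq> marked n" using pi by auto
  have inj: "inj_on pi_map (marked n)"
    by (rule inj_on_inverseI[where g = pi_inverse]) (use pi in auto)
  have "pi_map ` marked n = marked n"
    using endo_inj_surj[OF finite_marked maps_into inj] .
  with inj show ?thesis by (simp add: bij_betw_def)
qed

end
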